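(* Suppose A1 and A3 hold and let $\{x_k\}$ be generated by Algorithm 1. Let $N_k=\sum_{j=0}^{k}(l_j+1)$ be the total number of evaluations of $f$ at trial points $x_j+\alpha_j\beta^l d_j$ performed in iterations $0,\dots,k$. Then $$N_k\le 2(k+1)+\frac{1}{\log\beta}\left[\log\bar\alpha-\log\alpha_0\right],$$ where $\bar\alpha=\min\{\alpha_0,\,2(1-\rho)c_1/(Lc_2^2)\}$.
   Context: Let $(X,\langle\cdot,\cdot\rangle)$ be a real Hilbert space with induced norm $\|\cdot\|$, and $f:X\to\mathbb{R}$ Fréchet differentiable with gradient $\nabla f$. Algorithm 1 (general non-monotone descent algorithm): parameters $x_0\in X$, $\alpha_0>0$, $\beta,\rho\in(0,1)$. For $k=0,1,2,\dots$: choose $d_k\in X$ with $\langle\nabla f(x_k),d_k\rangle<0$; then for $l=0,1,2,\dots$ choose a number $\nu_{k,l}\ge 0$ and test $$f(x_k+\alpha_k\beta^l d_k)\le f(x_k)+\rho\alpha_k\beta^l\langle\nabla f(x_k),d_k\rangle+\nu_{k,l};$$ let $l_k$ be the first $l$ for which this holds, set $\nu_k:=\nu_{k,l_k}$, $x_{k+1}=x_k+\alpha_k\beta^{l_k}d_k$ and $\alpha_{k+1}=\alpha_k\beta^{l_k-1}$. It is assumed the algorithm generates infinite sequences (all $l_k$ finite). Assumptions: A1: $\nabla f$ is Lipschitz continuous with constant $L>0$. A3: there are constants $c_1,c_2>0$ with $\langle\nabla f(x_k),d_k\rangle\le -c_1\|\nabla f(x_k)\|^2$ and $\|d_k\|\le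 c_2\|\nabla f(x_k)\|$ for all $k$. *)

theory Defs
  imports "HOL-Analysis.Analysis"
begin

end

theory Submission
  imports Defs
begin

text \<open>With a Lipschitz gradient and a sufficiently descending direction, the Armijo test
  succeeds (even with \<open>\<nu> = 0\<close>) for every step \<open>t \<le> 2(1 - \<rho>) c\<^sub>1 / (L c\<^sub>2\<^sup>2)\<close>. Hence a
  backtracking step is only rejected when it exceeds this threshold, so by induction
  \<open>\<alpha>\<^sub>k \<ge> \<bar>\<alpha>\<close> for all \<open>k\<close>. Taking logarithms in \<open>\<alpha>\<^sub>k\<^sub>+\<^sub>1 = \<alpha>\<^sub>k \<beta>\<^bsup>l\<^sub>k - 1\<^esup>\<close> gives
  \<open>ln \<alpha>\<^sub>k\<^sub>+\<^sub>1 = ln \<alpha>\<^sub>0 + (\<Sum>\<^sub>j\<^sub>\<le>\<^sub>k (l\<^sub>j - 1)) ln \<beta>\<close>, and \<open>\<alpha>\<^sub>k\<^sub>+\<^sub>1 \<ge> \<bar>\<alpha>\<close> bounds the sum.\<close>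

lemma lipschitz_gradient_quadratic_upper_bound:
  fixes f :: "'a::real_inner \<Rightarrow> real" and g :: "'a \<Rightarrow> 'a"
  assumes grad: "\<And>y. (f has_derivative (\<lambda>h. inner (g y) h)) (at y)"
    and Lip: "\<And>u v. norm (g u - g v) \<le> L * norm (u - v)"
  shows "f (x + v) \<le> f x + inner (g x) v + L / 2 * (norm v)\<^sup>2"
proof -
  define \<phi> where "\<phi> s = f (x + s *\<^sub>R v) - s * inner (g x) v - L / 2 * s\<^sup>2 * (norm v)\<^sup>2"
    for s :: real
  have \<phi>_deriv: "DERIV \<phi> s :> inner (g (x + s *\<^sub>R v) - g x) v - L * s * (norm v)\<^sup>2" for s
  proof -
    have "((\<lambda>s. x + s *\<^sub>R v) has_derivative (\<lambda>h. h *\<^sub>R v)) (at s)"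
      by (auto intro!: derivative_eq_intros)
    from has_derivative_compose[OF this grad]
    have "((\<lambda>s. f (x + s *\<^sub>R v)) has_real_derivative inner (g (x + s *\<^sub>R v)) v) (at s)"
      by (rule has_derivative_imp_has_field_derivative) simp
    then show ?thesis unfolding \<phi>_def
      by (auto intro!: derivative_eq_intros simp: power2_eq_square inner_diff_left)
  qed
  have "inner (g (x + s *\<^sub>R v) - g x) v - L * s * (norm v)\<^sup>2 \<le> 0" if "0 \<le> s" for s
  proof -
    have "inner (g (x + s *\<^sub>R v) - g x) v \<le> norm (g (x + s *\<^sub>R v) - g x) * norm v"
      by (rule norm_cauchy_schwarz)
    also have "\<dots> \<le> L * norm (s *\<^sub>R v) * norm v"
      using Lip[of "x + s *\<^sub>R v" x] by (intro mult_right_mono) auto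
    also have "\<dots> = L * s * (norm v)\<^sup>2" using that by (simp add: power2_eq_square)
    finally show ?thesis by simp
  qed
  with \<phi>_deriv have "\<phi> 1 \<le> \<phi> 0"
    by (intro DERIV_nonpos_imp_nonincreasing[of 0 1]) (auto intro!: exI)
  then show ?thesis unfolding \<phi>_def by simp
qed

lemma armijo_condition_for_small_steps:
  fixes f :: "'a::real_inner \<Rightarrow> real" and g :: "'a \<Rightarrow> 'a"
  assumes grad: "\<And>y. (f has_derivative (\<lambda>h. inner (g y) h)) (at y)"
    and Lip: "\<And>u v. norm (g u - g v) \<le> L * norm (u - v)" and "L > 0"
    and "\<rho> < 1" and "c2 > 0"
    and angle: "inner (g x) d \<le> - c1 * (norm (g x))\<^sup>2"
    and length: "norm d \<le> c2 * norm (g x)"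
    and t: "0 < t" "t \<le> 2 * (1 - \<rho>) * c1 / (L * c2\<^sup>2)"
  shows "f (x + t *\<^sub>R d) \<le> f x + \<rho> * t * inner (g x) d"
proof -
  define G where "G = (norm (g x))\<^sup>2"
  define p where "p = inner (g x) d"
  have "(norm d)\<^sup>2 \<le> (c2 * norm (g x))\<^sup>2" using length by (intro power_mono) auto
  then have d_sq: "(norm d)\<^sup>2 \<le> c2\<^sup>2 * G" unfolding G_def by (simp add: power_mult_distrib)
  have t_scaled: "t * (L * c2\<^sup>2) \<le> 2 * (1 - \<rho>) * c1"
    using t \<open>L > 0\<close> \<open>c2 > 0\<close> by (simp add: field_simps)
  have "f (x + t *\<^sub>R d) \<le> f x + inner (g x) (t *\<^sub>R d) + L / 2 * (norm (t *\<^sub>R d))\<^sup>2"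
    by (rule lipschitz_gradient_quadratic_upper_bound[OF grad Lip])
  also have "\<dots> = f x + t * p + L / 2 * t\<^sup>2 * (norm d)\<^sup>2"
    using t by (simp add: p_def power_mult_distrib)
  also have "\<dots> \<le> f x + t * p + L / 2 * t\<^sup>2 * (c2\<^sup>2 * G)"
    using d_sq \<open>L > 0\<close> by (intro add_left_mono mult_left_mono) auto
  also have "L / 2 * t\<^sup>2 * (c2\<^sup>2 * G) = t / 2 * G * (t * (L * c2\<^sup>2))"
    by (simp add: power2_eq_square)
  also have "\<dots> \<le> t * (1 - \<rho>) * (c1 * G)"
    using mult_left_mono[OF t_scaled, of "t / 2 * G"] t by (simp add: G_def algebra_simps)
  also have "\<dots> \<le> t * (1 - \<rho>) * (- p)"
    using angle t \<open>\<rho> < 1\<close> by (intro mult_left_mono) (auto simp: p_def G_def)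
  finally show ?thesis by (simp add: p_def algebra_simps)
qed

lemma backtracking_stepsize_pos:
  fixes \<alpha> :: "nat \<Rightarrow> real" and \<beta> :: real
  assumes "\<alpha> 0 > 0" "\<beta> > 0"
    and step: "\<And>k. \<alpha> (Suc k) = \<alpha> k * \<beta> powi (int (l k) - 1)"
  shows "\<alpha> k > 0"
  by (induction k) (use assms in \<open>auto simp: step\<close>)

text \<open>The hypothesis \<open>rejected\<close> says that the last rejected trial step \<open>\<alpha>\<^sub>k \<beta>\<^bsup>l\<^sub>k - 1\<^esup>\<close>,
  which is also the next initial step, exceeds \<open>a\<close>.\<close>

lemma backtracking_stepsize_lower_bound:
  fixes \<alpha> :: "nat \<Rightarrow> real" and \<beta> a :: real
  assumes "\<alpha> 0 > 0" "0 < \<beta>" "\<beta> < 1"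
    and step: "\<And>k. \<alpha> (Suc k) = \<alpha> k * \<beta> powi (int (l k) - 1)"
    and rejected: "\<And>k. 0 < l k \<Longrightarrow> a < \<alpha> k * \<beta> ^ (l k - 1)"
  shows "min (\<alpha> 0) a \<le> \<alpha> k"
proof (induction k)
  case (Suc k)
  show ?case
  proof (cases "l k = 0")
    case True
    then have "\<alpha> (Suc k) = \<alpha> k / \<beta>" by (simp add: step power_int_minus divide_inverse)
    moreover have "\<alpha> k \<le> \<alpha> k / \<beta>"
      using backtracking_stepsize_pos[OF assms(1,2) step] assms by (simp add: le_divide_eq)
    ultimately show ?thesis using Suc by simp
  next
    case False
    then have "\<alpha> (Suc k) = \<alpha> k * \<beta> ^ (l k - 1)"
      by (simp add: step power_int_def nat_diff_distrib' of_nat_diff)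
    with rejected[of k] False show ?thesis by simp
  qed
qed simp

lemma ln_backtracking_stepsize:
  fixes \<alpha> :: "nat \<Rightarrow> real" and \<beta> :: real
  assumes "\<alpha> 0 > 0" "\<beta> > 0"
    and step: "\<And>k. \<alpha> (Suc k) = \<alpha> k * \<beta> powi (int (l k) - 1)"
  shows "ln (\<alpha> (Suc n)) = ln (\<alpha> 0) + (\<Sum>j\<le>n. real (l j) - 1) * ln \<beta>"
proof -
  have ln_step: "ln (\<alpha> (Suc k)) = ln (\<alpha> k) + (real (l k) - 1) * ln \<beta>" for k
  proof -
    have "\<alpha> (Suc k) = \<alpha> k * \<beta> ^ l k / \<beta>"
      using assms by (simp add: step power_int_diff)
    also have "ln \<dots> = ln (\<alpha> k) + real (l k) * ln \<beta> - ln \<beta>"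
      using backtracking_stepsize_pos[OF assms(1,2) step, of k] assms
      by (simp add: ln_div ln_mult ln_realpow)
    finally show ?thesis by (simp add: algebra_simps)
  qed
  show ?thesis by (induction n) (simp_all add: ln_step algebra_simps)
qed

lemma backtracking_evaluation_count_bound:
  fixes \<alpha> :: "nat \<Rightarrow> real" and \<beta> a :: real
  assumes "\<alpha> 0 > 0" "0 < \<beta>" "\<beta> < 1" "a > 0"
    and step: "\<And>k. \<alpha> (Suc k) = \<alpha> k * \<beta> powi (int (l k) - 1)"
    and lower: "\<And>k. a \<le> \<alpha> k"
  shows "real (\<Sum>j\<le>k. l j + 1) \<le> 2 * (real k + 1) + (1 / ln \<beta>) * (ln a - ln (\<alpha> 0))"
proof -
  define T where "T = (\<Sum>j\<le>k. real (l j) - 1)"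
  have count: "real (\<Sum>j\<le>k. l j + 1) = T + 2 * (real k + 1)"
    unfolding T_def by (simp add: sum.distrib sum_subtractf)
  have "ln a \<le> ln (\<alpha> (Suc k))" using lower[of "Suc k"] \<open>a > 0\<close> by simp
  then have "ln a - ln (\<alpha> 0) \<le> T * ln \<beta>"
    using ln_backtracking_stepsize[OF assms(1,2) step, of k] assms unfolding T_def by simp
  moreover have "ln \<beta> < 0" using assms by simp
  ultimately have "T \<le> (ln a - ln (\<alpha> 0)) / ln \<beta>" by (simp add: le_divide_eq)
  then show ?thesis using count by simp
qed

theorem theorem1:
  fixes f :: "'a::{real_inner, complete_space} \<Rightarrow> real"
    and g :: "'a \<Rightarrow> 'a"
    and x d :: "nat \<Rightarrow> 'a"
    and \<alpha> :: "nat \<Rightarrow> real"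
    and l :: "nat \<Rightarrow> nat"
    and \<nu> :: "nat \<Rightarrow> nat \<Rightarrow> real"
    and \<beta> \<rho> L c1 c2 :: real
    and k :: nat
  assumes grad: "\<And>y. (f has_derivative (\<lambda>h. inner (g y) h)) (at y)"
    and alpha0: "\<alpha> 0 > 0"
    and beta: "0 < \<beta>" "\<beta> < 1"
    and rho: "0 < \<rho>" "\<rho> < 1"
    and descent: "\<And>k. inner (g (x k)) (d k) < 0"
    and nu_nonneg: "\<And>k j. \<nu> k j \<ge> 0"
    and accept: "\<And>k. f (x k + (\<alpha> k * \<beta> ^ l k) *\<^sub>R d k)
        \<le> f (x k) + \<rho> * \<alpha> k * \<beta> ^ l k * inner (g (x k)) (d k) + \<nu> k (l k)"
    and first: "\<And>k j. j < l k \<Longrightarrow> \<not> (f (x k + (\<alpha> k * \<beta> ^ j) *\<^sub>R d k)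
        \<le> f (x k) + \<rho> * \<alpha> k * \<beta> ^ j * inner (g (x k)) (d k) + \<nu> k j)"
    and xstep: "\<And>k. x (Suc k) = x k + (\<alpha> k * \<beta> ^ l k) *\<^sub>R d k"
    and astep: "\<And>k. \<alpha> (Suc k) = \<alpha> k * \<beta> powi (int (l k) - 1)"
    and A1: "L > 0" "\<And>u v. norm (g u - g v) \<le> L * norm (u - v)"
    and A3: "c1 > 0" "c2 > 0"
      "\<And>k. inner (g (x k)) (d k) \<le> - c1 * (norm (g (x k)))\<^sup>2"
      "\<And>k. norm (d k) \<le> c2 * norm (g (x k))"
  shows "real (\<Sum>j\<le>k. l j + 1)
    \<le> 2 * (real k + 1) + (1 / ln \<beta>) * (ln (min (\<alpha> 0) (2 * (1 - \<rho>) * c1 / (L * c2\<^sup>2))) - ln (\<alpha> 0))"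
proof -
  define \<tau> where "\<tau> = 2 * (1 - \<rho>) * c1 / (L * c2\<^sup>2)"
  have "\<tau> < \<alpha> k * \<beta> ^ (l k - 1)" if "0 < l k" for k
  proof (rule ccontr)
    assume "\<not> \<tau> < \<alpha> k * \<beta> ^ (l k - 1)"
    moreover have "0 < \<alpha> k * \<beta> ^ (l k - 1)"
      using backtracking_stepsize_pos[OF alpha0 beta(1) astep] beta by simp
    ultimately have "f (x k + (\<alpha> k * \<beta> ^ (l k - 1)) *\<^sub>R d k)
        \<le> f (x k) + \<rho> * (\<alpha> k * \<beta> ^ (l k - 1)) * inner (g (x k)) (d k)"
      unfolding \<tau>_def by (intro armijo_condition_for_small_steps[OF grad A1(2,1) rho(2) A3(2-4)]) auto
    with first[of "l k - 1" k] nu_nonneg[of k "l k - 1"] \<open>0 < l k\<close> show False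
      by (simp add: mult.assoc)
  qed
  then have "\<And>k. min (\<alpha> 0) \<tau> \<le> \<alpha> k"
    using backtracking_stepsize_lower_bound[OF alpha0 beta astep] by blast
  moreover have "min (\<alpha> 0) \<tau> > 0" unfolding \<tau>_def using alpha0 rho A1 A3 by auto
  ultimately show ?thesis unfolding \<tau>_def
    using backtracking_evaluation_count_bound[OF alpha0 beta _ astep] by blast
qed

end
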